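(* For every join query $\mathcal R$, the MO bound $\sum_{c\in\mathcal C_2}\mathrm{IN}^{\mathsf{MO}(\mathcal R(c))}$ is $O(\mathsf{AGM}(\mathcal R))$, where the hidden factor depends only on the query schema (number of relations and attributes) and is at most polylogarithmic in $\mathrm{IN}$, but does not otherwise depend on the tuples.
   Context: A join query consists of a finite set $\mathcal R$ of relations; each $R$ is a finite set of tuples over attribute set $\mathsf{attr}(R)$; $\mathcal A=\bigcup_R\mathsf{attr}(R)$. $\mathrm{IN}=\sum_{R\in\mathcal R}|R|\ge 2$ (always the input size of the original query), and $\log$ denotes $\log_{\mathrm{IN}}$. For a relation $S$, $A\subseteq\mathsf{attr}(S)$ and $v\in\pi_A(S)$: $\mathsf{deg}(v,S,A)=|\{t\in S:\pi_A(t)=v\}|$; $d_{S,A}=\max_{v\in\pi_A(S)}\mathsf{deg}(v,S,A)$ for $A\neq\emptyset$, $d_{S,\emptyset}=|S|$; for $A\subseteq B\subseteq\mathsf{attr}(S)$, $d(A,B,S)=\log d_{\pi_B(S),A}$. Degree configurations: for $L>1$, buckets $B_l=[L^l,L^{l+1})$, $l\in\mathbb N$, ordered by index. A degree configuration $c$ maps each $(R,A)$ with $R\in\mathcal R$, $A\subseteq\mathsf{attr}(R)$ to a bucket $c(R,A)$ with $A'\subseteq A\Rightarrow c(R,A)\le c(R,A')$, $c(R,\mathsf{attr}(R))=B_0$, $c(R,\emptyset)=B_{\lfloor\log_L|R|\rfloor}$; $\mathcal C_L$ is the set of these. $R(c)=\{t\in R:\forall A\subseteq\mathsf{attr}(R),\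 \mathsf{deg}(\pi_A(t),R,A)\in c(R,A)\}$ and $\mathcal R(c)=\{R(c):R\in\mathcal R\}$. For a set $\mathcal S$ of (nonempty) relations with attribute set $\mathcal A$, the MO program has variables $s_F$ ($F\subseteq\mathcal A$) and constraints $s_\emptyset=0$; $s_F\le s_{F'}$ for $F\subseteq F'$; $s_{B\cup E}\le s_{A\cup E}+d(A,B,S)$ for all $S\in\mathcal S$, $E\subseteq\mathcal A$, $A\subseteq B\subseteq\mathsf{attr}(S)$; $\mathsf{MO}(\mathcal S)$ is the maximum of $s_{\mathcal A}$ (degrees computed in the relations of $\mathcal S$). (Configurations $c$ with some $R(c)=\emptyset$ contribute nothing to the join and may be omitted from the sum.) AGM bound: $\mathsf{AGM}(\mathcal S)=\mathrm{IN}^{\rho^*}$ where $\rho^*=\min\sum_{S\in\mathcal S}w_S\log|S|$ over $w_S\ge0$ with $\sum_{S:a\in\mathsf{attr}(S)}w_S\ge1$ for every attribute $a$. *)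

theory Defs
  imports Complex_Main
begin

(* Tuples over attributes 'a with values 'v are partial maps; a tuple t of a
   relation with schema attr has dom t = attr.  Projection onto A is t |` A. *)

type_synonym ('a, 'v) tuple = "'a \<rightharpoonup> 'v"

definition proj :: "'a set \<Rightarrow> ('a, 'v) tuple set \<Rightarrow> ('a, 'v) tuple set" where
  "proj A S = (\<lambda>t. t |` A) ` S"

definition deg :: "('a, 'v) tuple \<Rightarrow> ('a, 'v) tuple set \<Rightarrow> 'a set \<Rightarrow> nat" where
  "deg v S A = card {t \<in> S. t |` A = v}"

definition maxdeg :: "('a, 'v) tuple set \<Rightarrow> 'a set \<Rightarrow> nat" where
  "maxdeg S A = (if A = {} then card S else Max ((\<lambda>v. deg v S A) ` proj A S))"

definition dlog :: "real \<Rightarrow> 'a set \<Rightarrow> 'a set \<Rightarrow> ('a, 'v) tuple set \<Rightarrow> real" where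
  "dlog IN A B S = log IN (real (maxdeg (proj B S) A))"

definition all_attrs :: "'i set \<Rightarrow> ('i \<Rightarrow> 'a set) \<Rightarrow> 'a set" where
  "all_attrs I attr = \<Union> (attr ` I)"

definition input_size :: "'i set \<Rightarrow> ('i \<Rightarrow> ('a, 'v) tuple set) \<Rightarrow> real" where
  "input_size I R = real (\<Sum>i\<in>I. card (R i))"

definition MO_feasible :: "real \<Rightarrow> 'i set \<Rightarrow> ('i \<Rightarrow> 'a set) \<Rightarrow> ('i \<Rightarrow> ('a, 'v) tuple set)
    \<Rightarrow> ('a set \<Rightarrow> real) \<Rightarrow> bool" where
  "MO_feasible IN I attr S s \<longleftrightarrow>
     s {} = 0 \<and>
     (\<forall>F F'. F \<subseteq> F' \<and> F' \<subseteq> all_attrs I attr \<longrightarrow> s F \<le> s F') \<and>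
     (\<forall>i\<in>I. \<forall>E. E \<subseteq> all_attrs I attr \<longrightarrow> (\<forall>A B. A \<subseteq> B \<and> B \<subseteq> attr i \<longrightarrow>
        s (B \<union> E) \<le> s (A \<union> E) + dlog IN A B (S i)))"

definition MO :: "real \<Rightarrow> 'i set \<Rightarrow> ('i \<Rightarrow> 'a set) \<Rightarrow> ('i \<Rightarrow> ('a, 'v) tuple set) \<Rightarrow> real" where
  "MO IN I attr S = Sup {s (all_attrs I attr) | s. MO_feasible IN I attr S s}"

definition AGM :: "real \<Rightarrow> 'i set \<Rightarrow> ('i \<Rightarrow> 'a set) \<Rightarrow> ('i \<Rightarrow> ('a, 'v) tuple set) \<Rightarrow> real" where
  "AGM IN I attr S = IN powr (Inf {(\<Sum>i\<in>I. w i * log IN (real (card (S i)))) | w.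
      (\<forall>i\<in>I. 0 \<le> w i) \<and>
      (\<forall>a\<in>all_attrs I attr. (\<Sum>i\<in>{i\<in>I. a \<in> attr i}. w i) \<ge> 1)})"

definition bucket :: "real \<Rightarrow> nat \<Rightarrow> real set" where
  "bucket L l = {x. L ^ l \<le> x \<and> x < L ^ Suc l}"

(* degree configurations C_L: c i A is the index of the bucket c(R_i, A);
   c is taken extensional (0) outside i in I, A \<subseteq> attr i *)
definition configs :: "real \<Rightarrow> 'i set \<Rightarrow> ('i \<Rightarrow> 'a set) \<Rightarrow> ('i \<Rightarrow> ('a, 'v) tuple set)
    \<Rightarrow> ('i \<Rightarrow> 'a set \<Rightarrow> nat) set" where
  "configs L I attr R = {c.
     (\<forall>i\<in>I. \<forall>A A'. A' \<subseteq> A \<and> A \<subseteq> attr i \<longrightarrow> c i A \<le> c i A') \<and>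
     (\<forall>i\<in>I. c i (attr i) = 0) \<and>
     (\<forall>i\<in>I. int (c i {}) = \<lfloor>log L (real (card (R i)))\<rfloor>) \<and>
     (\<forall>i A. i \<notin> I \<or> \<not> A \<subseteq> attr i \<longrightarrow> c i A = 0)}"

definition restr :: "real \<Rightarrow> ('i \<Rightarrow> 'a set) \<Rightarrow> ('i \<Rightarrow> ('a, 'v) tuple set)
    \<Rightarrow> ('i \<Rightarrow> 'a set \<Rightarrow> nat) \<Rightarrow> 'i \<Rightarrow> ('a, 'v) tuple set" where
  "restr L attr R c i = {t \<in> R i. \<forall>A. A \<subseteq> attr i \<longrightarrow>
       real (deg (t |` A) (R i) A) \<in> bucket L (c i A)}"

definition MO_bound :: "real \<Rightarrow> 'i set \<Rightarrow> ('i \<Rightarrow> 'a set) \<Rightarrow> ('i \<Rightarrow> ('a, 'v) tuple set) \<Rightarrow> real" where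
  "MO_bound L I attr R =
     (\<Sum>c \<in> {c \<in> configs L I attr R. \<forall>i\<in>I. restr L attr R c i \<noteq> {}}.
        input_size I R powr MO (input_size I R) I attr (restr L attr R c))"

end

theory Submission
  imports Defs "HOL-Library.FuncSet"
begin

text \<open>Fix a degree configuration \<open>c\<close> and a fractional edge cover \<open>w\<close>. Adding the attributes
  one at a time to a feasible MO solution, the step for a new attribute \<open>a\<close> can be charged to any
  relation \<open>R\<^sub>i\<close> containing \<open>a\<close>: it costs \<open>log L\<close> times one plus the drop of the bucket index of
  \<open>R\<^sub>i\<close>, since a degree in \<open>R(c)\<close> is at most the ratio of two bucket bounds. Charging the relation
  with the smallest drop against the weights \<open>w\<^sub>i\<close>, the drops telescope to \<open>\<Sum> w\<^sub>i c(R\<^sub>i, \<emptyset>)\<close>, so every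
  configuration contributes at most \<open>L\<^sup>|\<^sup>A\<^sup>| \<cdot> AGM\<close>. A configuration is a vector of bucket indices
  below \<open>log\<^sub>L IN\<close>, one per pair \<open>(R, A)\<close>, so there are polylogarithmically many of them.\<close>

lemma restr_subset: "restr L attr R c i \<subseteq> R i"
  unfolding restr_def by blast

lemma deg_proj_pos:
  assumes "finite S" "t \<in> S" "A \<subseteq> B"
  shows "0 < deg (t |` A) (proj B S) A"
proof -
  have "t |` B \<in> {u \<in> proj B S. u |` A = t |` A}"
    using assms(2,3) unfolding proj_def by (auto simp: Int_absorb1)
  moreover have "finite {u \<in> proj B S. u |` A = t |` A}"
    using assms(1) unfolding proj_def by simp
  ultimately show ?thesis unfolding deg_def by (auto simp: card_gt_0_iff)
qed

lemma maxdeg_proj_attained: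
  assumes "finite S" "S \<noteq> {}" "A \<subseteq> B"
  obtains t where "t \<in> S" "maxdeg (proj B S) A = deg (t |` A) (proj B S) A"
proof (cases "A = {}")
  case True
  obtain t where "t \<in> S" using assms(2) by blast
  moreover have "maxdeg (proj B S) A = deg (t |` A) (proj B S) A"
    using True unfolding maxdeg_def deg_def by simp
  ultimately show ?thesis using that by blast
next
  case False
  let ?degs = "(\<lambda>v. deg v (proj B S) A) ` proj A (proj B S)"
  have "finite ?degs" "?degs \<noteq> {}"
    unfolding proj_def using assms(1,2) by auto
  then have "Max ?degs \<in> ?degs" by (rule Max_in)
  then obtain v where v: "v \<in> proj A (proj B S)" "maxdeg (proj B S) A = deg v (proj B S) A"
    using False unfolding maxdeg_def by auto
  then obtain t where "t \<in> S" "v = (t |` B) |` A" unfolding proj_def by auto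
  moreover have "(t |` B) |` A = t |` A" using assms(3) by (simp add: Int_absorb1)
  ultimately show ?thesis using v that by simp
qed

lemma dlog_nonneg:
  assumes "1 < IN" "finite S" "S \<noteq> {}" "A \<subseteq> B"
  shows "0 \<le> dlog IN A B S"
proof -
  obtain t where "t \<in> S" "maxdeg (proj B S) A = deg (t |` A) (proj B S) A"
    using maxdeg_proj_attained assms(2-4) by blast
  then have "1 \<le> maxdeg (proj B S) A"
    using deg_proj_pos assms(2,4) by (metis Suc_leI One_nat_def)
  then show ?thesis unfolding dlog_def using assms(1) by simp
qed

lemma MO_feasible_zero:
  assumes "1 < IN" "\<forall>i\<in>I. finite (S i) \<and> S i \<noteq> {}"
  shows "MO_feasible IN I attr S (\<lambda>_. 0)"
  unfolding MO_feasible_def using assms(2) by (auto intro!: dlog_nonneg[OF assms(1)])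

text \<open>Each \<open>B\<close>-projection counted on the left lies above at least \<open>L ^ c i B\<close> tuples of \<open>R i\<close>
  (its bucket), and all of these agree with \<open>t\<close> on \<open>A\<close>, which fewer than \<open>L ^ Suc (c i A)\<close> tuples do.\<close>
lemma deg_proj_restr_less:
  assumes fin: "finite (R i)" and AB: "A \<subseteq> B" "B \<subseteq> attr i"
    and t: "t \<in> restr L attr R c i"
  shows "real (deg (t |` A) (proj B (restr L attr R c i)) A) * L ^ c i B < L ^ Suc (c i A)"
proof -
  define W where "W = {w \<in> proj B (restr L attr R c i). w |` A = t |` A}"
  have "finite (restr L attr R c i)" using fin restr_subset finite_subset by metis
  then have finW: "finite W" unfolding W_def proj_def by simp
  have fibre_large: "L ^ c i B \<le> real (card {u \<in> R i. u |` B = w})" if w: "w \<in> W" for w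
  proof -
    obtain u where "u \<in> restr L attr R c i" "w = u |` B"
      using w unfolding W_def proj_def by auto
    then have "real (deg w (R i) B) \<in> bucket L (c i B)"
      using AB unfolding restr_def by auto
    then show ?thesis unfolding bucket_def deg_def by auto
  qed
  have fibres_in_class: "(\<Union>w\<in>W. {u \<in> R i. u |` B = w}) \<subseteq> {u \<in> R i. u |` A = t |` A}"
  proof clarify
    fix u assume "u \<in> R i" "u |` B \<in> W"
    moreover have "u |` A = (u |` B) |` A" using AB by (simp add: Int_absorb1)
    ultimately show "u |` A = t |` A" unfolding W_def by simp
  qed
  have "real (card W) * L ^ c i B \<le> (\<Sum>w\<in>W. real (card {u \<in> R i. u |` B = w}))"
    using sum_mono[OF fibre_large] by simp
  also have "\<dots> = real (card (\<Union>w\<in>W. {u \<in> R i. u |` B = w}))"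
    by (subst card_UN_disjoint) (use finW fin in auto)
  also have "\<dots> \<le> real (deg (t |` A) (R i) A)"
    unfolding deg_def using card_mono[OF _ fibres_in_class] fin by simp
  also have "\<dots> < L ^ Suc (c i A)"
  proof -
    have "real (deg (t |` A) (R i) A) \<in> bucket L (c i A)"
      using t AB unfolding restr_def by blast
    then show ?thesis unfolding bucket_def by simp
  qed
  finally show ?thesis unfolding deg_def W_def by simp
qed

lemma dlog_restr_le:
  assumes "1 < IN" "1 < L" "finite (R i)" "restr L attr R c i \<noteq> {}" "A \<subseteq> B" "B \<subseteq> attr i"
  shows "dlog IN A B (restr L attr R c i) \<le> log IN L * (real (c i A) + 1 - real (c i B))"
proof -
  let ?S = "restr L attr R c i"
  have finS: "finite ?S" using assms(3) restr_subset finite_subset by metis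
  obtain t where t: "t \<in> ?S" and md: "maxdeg (proj B ?S) A = deg (t |` A) (proj B ?S) A"
    using maxdeg_proj_attained[OF finS assms(4,5)] by blast
  define d where "d = real (maxdeg (proj B ?S) A)"
  have "0 < d" unfolding d_def md using deg_proj_pos[OF finS t assms(5)] by simp
  have "d * L ^ c i B < L ^ Suc (c i A)"
    unfolding d_def md using deg_proj_restr_less[OF assms(3,5,6) t] .
  then have "log IN (d * L ^ c i B) < log IN (L ^ Suc (c i A))"
    using \<open>0 < d\<close> assms(1,2) by (subst log_less_cancel_iff) auto
  then have "log IN d + log IN (L ^ c i B) < log IN (L ^ Suc (c i A))"
    using \<open>0 < d\<close> assms(1,2) by (simp add: log_mult)
  then show ?thesis
    using assms(1,2) unfolding dlog_def d_def[symmetric] by (simp add: log_mult log_nat_power algebra_simps)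
qed

lemma config_antimono:
  "c \<in> configs L I attr R \<Longrightarrow> i \<in> I \<Longrightarrow> A' \<subseteq> A \<Longrightarrow> A \<subseteq> attr i \<Longrightarrow> c i A \<le> c i A'"
  unfolding configs_def by blast

lemma exists_le_weighted_sum:
  fixes w D :: "'i \<Rightarrow> real"
  assumes "finite J" "J \<noteq> {}" "\<forall>i\<in>J. 0 \<le> w i" "1 \<le> (\<Sum>i\<in>J. w i)" "\<forall>i\<in>J. 0 \<le> D i"
  obtains j where "j \<in> J" "D j \<le> (\<Sum>i\<in>J. w i * D i)"
proof -
  have "Min (D ` J) \<in> D ` J" using assms(1,2) by simp
  then obtain j where j: "j \<in> J" "D j = Min (D ` J)" by auto
  have "D j \<le> D j * (\<Sum>i\<in>J. w i)"
    using assms(4,5) j(1) mult_left_mono[of 1 "\<Sum>i\<in>J. w i" "D j"] by simp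
  also have "\<dots> = (\<Sum>i\<in>J. w i * D j)" by (simp add: sum_distrib_left mult.commute)
  also have "\<dots> \<le> (\<Sum>i\<in>J. w i * D i)"
    using assms(1,3) j(2) by (intro sum_mono mult_left_mono) auto
  finally show ?thesis using j(1) that by blast
qed

lemma MO_feasibleD:
  "MO_feasible IN I attr S s \<Longrightarrow> i \<in> I \<Longrightarrow> E \<subseteq> all_attrs I attr \<Longrightarrow> A \<subseteq> B \<Longrightarrow> B \<subseteq> attr i
    \<Longrightarrow> s (B \<union> E) \<le> s (A \<union> E) + dlog IN A B (S i)"
  unfolding MO_feasible_def by blast

lemma MO_feasible_restr_insert:
  assumes s: "MO_feasible IN I attr (restr L attr R c) s" and "1 < IN" "1 < L"
    and "finite (R i)" "restr L attr R c i \<noteq> {}"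
    and i: "i \<in> I" "a \<in> attr i" and X: "X \<subseteq> all_attrs I attr"
  shows "s (insert a X)
    \<le> s X + log IN L * (real (c i (attr i \<inter> X)) + 1 - real (c i (attr i \<inter> insert a X)))"
proof -
  have "s ((attr i \<inter> insert a X) \<union> X)
      \<le> s ((attr i \<inter> X) \<union> X) + dlog IN (attr i \<inter> X) (attr i \<inter> insert a X) (restr L attr R c i)"
    by (rule MO_feasibleD[OF s i(1) X]) auto
  moreover have "(attr i \<inter> insert a X) \<union> X = insert a X" "(attr i \<inter> X) \<union> X = X"
    using i(2) by auto
  moreover have "dlog IN (attr i \<inter> X) (attr i \<inter> insert a X) (restr L attr R c i)
      \<le> log IN L * (real (c i (attr i \<inter> X)) + 1 - real (c i (attr i \<inter> insert a X)))"
    by (rule dlog_restr_le[OF assms(2-5)]) auto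
  ultimately show ?thesis by simp
qed

lemma MO_feasible_restr_le:
  fixes w :: "'i \<Rightarrow> real"
  assumes s: "MO_feasible IN I attr (restr L attr R c) s" and IN: "1 < IN" and L: "1 < L"
    and I: "finite I" and R: "\<forall>i\<in>I. finite (R i) \<and> restr L attr R c i \<noteq> {}"
    and c: "c \<in> configs L I attr R"
    and w: "\<forall>i\<in>I. 0 \<le> w i" "\<forall>a\<in>all_attrs I attr. 1 \<le> (\<Sum>i\<in>{i\<in>I. a \<in> attr i}. w i)"
    and X: "finite X" "X \<subseteq> all_attrs I attr"
  shows "s X \<le> log IN L *
    ((\<Sum>i\<in>I. w i * (real (c i {}) - real (c i (attr i \<inter> X)))) + real (card X))"
  using X
proof (induction X rule: finite_subset_induct')
  case empty
  then show ?case using s unfolding MO_feasible_def by simp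
next
  case (insert a X)
  define J where "J = {i\<in>I. a \<in> attr i}"
  define D where "D i = real (c i (attr i \<inter> X)) - real (c i (attr i \<inter> insert a X))" for i
  have D_nonneg: "\<forall>i\<in>I. 0 \<le> D i"
    unfolding D_def by (auto intro!: config_antimono[OF c])
  have "finite J" "J \<noteq> {}" using I insert(2) unfolding J_def all_attrs_def by auto
  moreover have "\<forall>i\<in>J. 0 \<le> w i" "1 \<le> (\<Sum>i\<in>J. w i)" "\<forall>i\<in>J. 0 \<le> D i"
    using w D_nonneg insert(2) unfolding J_def by auto
  ultimately obtain j where j: "j \<in> J" "D j \<le> (\<Sum>i\<in>J. w i * D i)"
    by (rule exists_le_weighted_sum)
  have "(\<Sum>i\<in>J. w i * D i) = (\<Sum>i\<in>I. w i * D i)"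
    using I by (intro sum.mono_neutral_left) (auto simp: J_def D_def)
  with j have Dj: "D j \<le> (\<Sum>i\<in>I. w i * D i)" by simp
  have "s (insert a X) \<le> s X + log IN L * (D j + 1)"
    using MO_feasible_restr_insert[OF s IN L, of j a X] j(1) R insert(3)
    unfolding J_def D_def by (simp add: algebra_simps)
  also have "\<dots> \<le> s X + log IN L * ((\<Sum>i\<in>I. w i * D i) + 1)"
    using Dj IN L by (intro add_left_mono mult_left_mono) auto
  also have "\<dots> \<le> log IN L * ((\<Sum>i\<in>I. w i * (real (c i {}) - real (c i (attr i \<inter> X))))
      + (\<Sum>i\<in>I. w i * D i) + real (card X) + 1)"
    using insert(5) by (simp add: algebra_simps)
  also have "(\<Sum>i\<in>I. w i * (real (c i {}) - real (c i (attr i \<inter> X)))) + (\<Sum>i\<in>I. w i * D i)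
      = (\<Sum>i\<in>I. w i * (real (c i {}) - real (c i (attr i \<inter> insert a X))))"
    unfolding sum.distrib[symmetric] D_def by (intro sum.cong) (simp_all add: algebra_simps)
  finally show ?case using insert(1,4) by (simp add: algebra_simps)
qed

lemma config_empty_le_log:
  assumes "c \<in> configs L I attr R" "i \<in> I"
  shows "real (c i {}) \<le> log L (real (card (R i)))"
proof -
  have "int (c i {}) = \<lfloor>log L (real (card (R i)))\<rfloor>"
    using assms unfolding configs_def by blast
  then show ?thesis by (metis of_int_floor_le of_int_of_nat_eq)
qed

lemma MO_restr_le:
  fixes w :: "'i \<Rightarrow> real"
  assumes IN: "1 < IN" and L: "1 < L" and I: "finite I" "\<forall>i\<in>I. finite (attr i)"
    and R: "\<forall>i\<in>I. finite (R i) \<and> restr L attr R c i \<noteq> {}"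
    and c: "c \<in> configs L I attr R"
    and w: "\<forall>i\<in>I. 0 \<le> w i" "\<forall>a\<in>all_attrs I attr. 1 \<le> (\<Sum>i\<in>{i\<in>I. a \<in> attr i}. w i)"
  shows "MO IN I attr (restr L attr R c)
    \<le> log IN L * ((\<Sum>i\<in>I. w i * real (c i {})) + real (card (all_attrs I attr)))"
proof -
  have fin: "finite (all_attrs I attr)" unfolding all_attrs_def using I by auto
  have full: "attr i \<inter> all_attrs I attr = attr i" "c i (attr i) = 0" if "i \<in> I" for i
    using that c unfolding all_attrs_def configs_def by auto
  have "s (all_attrs I attr)
      \<le> log IN L * ((\<Sum>i\<in>I. w i * real (c i {})) + real (card (all_attrs I attr)))"
    if "MO_feasible IN I attr (restr L attr R c) s" for s
    using MO_feasible_restr_le[OF that IN L I(1) R c w fin subset_refl] full by simp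
  moreover have "MO_feasible IN I attr (restr L attr R c) (\<lambda>_. 0)"
    using MO_feasible_zero[OF IN] R restr_subset finite_subset by metis
  ultimately show ?thesis unfolding MO_def by (intro cSup_least) auto
qed

lemma powr_MO_restr_le_AGM:
  assumes IN: "1 < IN" and L: "1 < L" and I: "finite I" "\<forall>i\<in>I. finite (attr i)"
    and R: "\<forall>i\<in>I. finite (R i) \<and> restr L attr R c i \<noteq> {}"
    and c: "c \<in> configs L I attr R"
  shows "IN powr MO IN I attr (restr L attr R c) \<le> L ^ card (all_attrs I attr) * AGM IN I attr R"
proof -
  define W where "W = {(\<Sum>i\<in>I. w i * log IN (real (card (R i)))) | w.
      (\<forall>i\<in>I. 0 \<le> w i) \<and> (\<forall>a\<in>all_attrs I attr. (\<Sum>i\<in>{i\<in>I. a \<in> attr i}. w i) \<ge> 1)}"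
  define m where "m = card (all_attrs I attr)"
  have "(\<Sum>i\<in>I. 1 * log IN (real (card (R i)))) \<in> W"
    unfolding W_def all_attrs_def using I(1)
    by (fastforce intro!: exI[of _ "\<lambda>_. 1"] simp: Suc_le_eq card_gt_0_iff)
  then have "W \<noteq> {}" by blast
  have "MO IN I attr (restr L attr R c) - log IN L * m \<le> Inf W"
  proof (rule cInf_greatest[OF \<open>W \<noteq> {}\<close>])
    fix y assume "y \<in> W"
    then obtain w where y: "y = (\<Sum>i\<in>I. w i * log IN (real (card (R i))))"
      and w: "\<forall>i\<in>I. 0 \<le> w i" "\<forall>a\<in>all_attrs I attr. 1 \<le> (\<Sum>i\<in>{i\<in>I. a \<in> attr i}. w i)"
      unfolding W_def by blast
    have "log IN L * real (c i {}) \<le> log IN (real (card (R i)))" if "i \<in> I" for i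
    proof -
      have "0 < card (R i)" using R restr_subset that by (fastforce simp: card_gt_0_iff)
      have "log IN L * real (c i {}) \<le> log IN L * log L (real (card (R i)))"
        using config_empty_le_log[OF c that] IN L by (intro mult_left_mono) auto
      also have "\<dots> = log IN (real (card (R i)))"
        using IN L \<open>0 < card (R i)\<close> by (simp add: log_def)
      finally show ?thesis .
    qed
    then have "log IN L * (\<Sum>i\<in>I. w i * real (c i {})) \<le> y"
      unfolding y sum_distrib_left using w(1)
      by (intro sum_mono) (metis mult.left_commute mult_left_mono)
    then show "MO IN I attr (restr L attr R c) - log IN L * m \<le> y"
      using MO_restr_le[OF IN L I R c w] unfolding m_def by (simp add: algebra_simps)
  qed
  then have "IN powr MO IN I attr (restr L attr R c) \<le> IN powr (Inf W + log IN L * m)"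
    using IN by (intro powr_mono) auto
  also have "\<dots> = AGM IN I attr R * (IN powr log IN L) powr m"
    unfolding AGM_def W_def by (simp add: powr_add powr_powr)
  also have "\<dots> = L ^ m * AGM IN I attr R"
    using IN L by (simp add: powr_realpow)
  finally show ?thesis unfolding m_def .
qed

lemma config_le_nat_floor_log:
  assumes c: "c \<in> configs L I attr R" and L: "1 < L" and i: "i \<in> I" "A \<subseteq> attr i"
    and R: "0 < card (R i)" "real (card (R i)) \<le> n"
  shows "c i A \<le> nat \<lfloor>log L n\<rfloor>"
proof -
  have "c i A \<le> c i {}" using config_antimono[OF c i(1)] i(2) by blast
  moreover have "int (c i {}) = \<lfloor>log L (real (card (R i)))\<rfloor>"
    using c i(1) unfolding configs_def by blast
  moreover have "\<lfloor>log L (real (card (R i)))\<rfloor> \<le> \<lfloor>log L n\<rfloor>"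
    using L R by (intro floor_mono) simp
  ultimately show ?thesis by linarith
qed

lemma card_configs_le:
  assumes I: "finite I" "\<forall>i\<in>I. finite (attr i)" and L: "1 < L"
    and R: "\<forall>i\<in>I. 0 < card (R i) \<and> real (card (R i)) \<le> n"
  shows "finite (configs L I attr R)"
    and "card (configs L I attr R) \<le> Suc (nat \<lfloor>log L n\<rfloor>) ^ card (Sigma I (\<lambda>i. Pow (attr i)))"
proof -
  define P where "P = Sigma I (\<lambda>i. Pow (attr i))"
  define N where "N = nat \<lfloor>log L n\<rfloor>"
  define f where "f c = restrict (\<lambda>(i, A). c i A) P" for c :: "_ \<Rightarrow> _ \<Rightarrow> nat"
  have "finite P" unfolding P_def using I by auto
  have inj: "inj_on f (configs L I attr R)"
  proof (rule inj_onI, intro ext)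
    fix c c' i A
    assume c: "c \<in> configs L I attr R" and c': "c' \<in> configs L I attr R" and eq: "f c = f c'"
    show "c i A = c' i A"
    proof (cases "i \<in> I \<and> A \<subseteq> attr i")
      case True
      then show ?thesis using fun_cong[OF eq, of "(i, A)"] unfolding f_def P_def by simp
    next
      case False
      then show ?thesis using c c' unfolding configs_def by auto
    qed
  qed
  have into: "f ` configs L I attr R \<subseteq> PiE P (\<lambda>_. {..N})"
  proof (rule image_subsetI)
    fix c assume c: "c \<in> configs L I attr R"
    have "c i A \<in> {..N}" if "(i, A) \<in> P" for i A
      using config_le_nat_floor_log[OF c L] R that unfolding P_def N_def by auto
    then show "f c \<in> PiE P (\<lambda>_. {..N})" unfolding f_def by (auto simp: restrict_PiE_iff)
  qed
  have "finite (PiE P (\<lambda>_. {..N}))" using \<open>finite P\<close> by (simp add: finite_PiE)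
  then show "finite (configs L I attr R)" using inj_on_finite[OF inj into] by blast
  have "card (configs L I attr R) \<le> card (PiE P (\<lambda>_. {..N}))"
    by (rule card_inj_on_le[OF inj into \<open>finite (PiE P (\<lambda>_. {..N}))\<close>])
  also have "\<dots> = Suc N ^ card P" using \<open>finite P\<close> by (simp add: card_PiE)
  finally show "card (configs L I attr R) \<le> Suc N ^ card (Sigma I (\<lambda>i. Pow (attr i)))"
    unfolding P_def .
qed

lemma MO_bound_le:
  assumes I: "finite I" "\<forall>i\<in>I. finite (attr i)" and L: "1 < L"
    and R: "\<forall>i\<in>I. finite (R i) \<and> R i \<noteq> {}" and IN: "1 < input_size I R"
  shows "MO_bound L I attr R \<le> real (Suc (nat \<lfloor>log L (input_size I R)\<rfloor>)) ^ card (Sigma I (\<lambda>i. Pow (attr i)))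
    * (L ^ card (all_attrs I attr) * AGM (input_size I R) I attr R)"
proof -
  define CS where "CS = {c \<in> configs L I attr R. \<forall>i\<in>I. restr L attr R c i \<noteq> {}}"
  define B where "B = L ^ card (all_attrs I attr) * AGM (input_size I R) I attr R"
  have R': "\<forall>i\<in>I. 0 < card (R i) \<and> real (card (R i)) \<le> input_size I R"
  proof
    fix i assume i: "i \<in> I"
    then have "card (R i) \<le> (\<Sum>j\<in>I. card (R j))" using I(1) by (intro member_le_sum) auto
    then have "real (card (R i)) \<le> input_size I R" unfolding input_size_def by (simp only: of_nat_le_iff)
    moreover have "0 < card (R i)" using R i by (simp add: card_gt_0_iff)
    ultimately show "0 < card (R i) \<and> real (card (R i)) \<le> input_size I R" by blast
  qed
  have "MO_bound L I attr R \<le> real (card CS) * B"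
    unfolding MO_bound_def CS_def[symmetric]
  proof (rule sum_bounded_above)
    fix c assume "c \<in> CS"
    then show "input_size I R powr MO (input_size I R) I attr (restr L attr R c) \<le> B"
      using R unfolding CS_def B_def by (intro powr_MO_restr_le_AGM[OF IN L I]) auto
  qed
  also have "\<dots> \<le> real (Suc (nat \<lfloor>log L (input_size I R)\<rfloor>)) ^ card (Sigma I (\<lambda>i. Pow (attr i))) * B"
  proof (rule mult_right_mono)
    have "card CS \<le> card (configs L I attr R)"
      using card_configs_le(1)[OF I L R'] by (rule card_mono) (auto simp: CS_def)
    also note card_configs_le(2)[OF I L R']
    finally show "real (card CS) \<le> real (Suc (nat \<lfloor>log L (input_size I R)\<rfloor>)) ^ card (Sigma I (\<lambda>i. Pow (attr i)))"
      by (metis of_nat_le_iff of_nat_power)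
    show "0 \<le> B" using L unfolding B_def AGM_def by simp
  qed
  finally show ?thesis unfolding B_def .
qed

lemma Suc_nat_floor_log_le_ln:
  assumes L: "1 < L" and x: "2 \<le> x"
  shows "real (Suc (nat \<lfloor>log L x\<rfloor>)) \<le> (1 / ln L + 1 / ln 2) * ln x"
proof -
  have "real (nat \<lfloor>log L x\<rfloor>) \<le> log L x" using L x by simp
  also have "\<dots> = ln x / ln L" by (simp add: log_def)
  finally have "real (Suc (nat \<lfloor>log L x\<rfloor>)) \<le> ln x / ln L + 1" by simp
  moreover have "1 \<le> ln x / ln 2" using x by simp
  ultimately have "real (Suc (nat \<lfloor>log L x\<rfloor>)) \<le> ln x / ln L + ln x / ln 2" by linarith
  then show ?thesis by (simp add: distrib_right)
qed

theorem theorem3p3: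
  fixes I :: "'i set" and attr :: "'i \<Rightarrow> 'a set"
  assumes "finite I" and "\<forall>i\<in>I. finite (attr i)"
  shows "\<exists>C::real. \<exists>k::nat. \<forall>R :: 'i \<Rightarrow> ('a, 'v) tuple set.
           (\<forall>i\<in>I. finite (R i) \<and> R i \<noteq> {} \<and> (\<forall>t\<in>R i. dom t = attr i)) \<and>
           input_size I R \<ge> 2 \<longrightarrow>
           MO_bound 2 I attr R \<le>
             C * (ln (input_size I R)) ^ k * AGM (input_size I R) I attr R"
proof -
  define K where "K = card (Sigma I (\<lambda>i. Pow (attr i)))"
  define m where "m = card (all_attrs I attr)"
  define C :: real where "C = (1 / ln 2 + 1 / ln 2) ^ K * 2 ^ m"
  show ?thesis
  proof (intro exI[of _ C] exI[of _ K] allI impI)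
    fix R :: "'i \<Rightarrow> ('a, 'v) tuple set"
    let ?IN = "input_size I R"
    assume R: "(\<forall>i\<in>I. finite (R i) \<and> R i \<noteq> {} \<and> (\<forall>t\<in>R i. dom t = attr i)) \<and> 2 \<le> ?IN"
    have "MO_bound 2 I attr R \<le> real (Suc (nat \<lfloor>log 2 ?IN\<rfloor>)) ^ K * (2 ^ m * AGM ?IN I attr R)"
      using MO_bound_le[OF assms, of 2 R] R unfolding K_def m_def by simp
    also have "\<dots> \<le> ((1 / ln 2 + 1 / ln 2) * ln ?IN) ^ K * (2 ^ m * AGM ?IN I attr R)"
      using Suc_nat_floor_log_le_ln[of 2 ?IN] R
      by (intro mult_right_mono power_mono) (auto simp: AGM_def)
    also have "\<dots> = C * ln ?IN ^ K * AGM ?IN I attr R"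
      unfolding C_def power_mult_distrib by (simp only: ac_simps)
    finally show "MO_bound 2 I attr R \<le> C * ln ?IN ^ K * AGM ?IN I attr R" .
  qed
qed

end
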